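(* Let $n\geq 2$ and $m\geq 1$ be integers, let $K$ be an infinite field, and let $p(x_1,\ldots,x_m)\in K\langle x_1,\ldots,x_m\rangle$ be a noncommutative polynomial with zero constant term. Suppose $\mathrm{ord}(p)=r$ with $1<r<n-1$. Then \[ p(T_n(K))+p(T_n(K))=T_n(K)^{(r-1)}, \] i.e. every matrix in $T_n(K)^{(r-1)}$ is a sum of two elements of $p(T_n(K))$, and every such sum lies in $T_n(K)^{(r-1)}$. In particular, if $r=n-2$, then $p(T_n(K))=T_n(K)^{(n-3)}$.
   Context: $T_n(K)$ denotes the algebra of $n\times n$ upper triangular matrices over $K$. For an integer $t\geq 0$, $T_n(K)^{(t)}$ denotes the set of upper triangular $n\times n$ matrices whose $(i,j)$ entries are zero whenever $j-i\leq t$ (so $T_n(K)^{(t)}$ is the $(t+1)$-st power $J^{t+1}$ of the Jacobson radical $J$ of $T_n(K)$). For an algebra $\mathcal{A}$, $p(\mathcal{A})=\{p(a_1,\ldots,a_m): a_1,\ldots,a_m\in\mathcal{A}\}$, and $p(\mathcal{A})+p(\mathcal{A})=\{a+b: a,b\in p(\mathcal{A})\}$. The order $\mathrm{ord}(p)$ of a polynomial $p$ with zero constant term is the least positive integer $r$ such that $p(T_r(K))=\{0\}$ but $p(T_{r+1}(K))\neq\{0\}$, where $T_1(K)=K$; $p$ has order $0$ if $p(K)\neq\{0\}$. *)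

theory Defs
  imports "Jordan_Normal_Form.Matrix" "HOL-Library.Poly_Mapping"
begin

text \<open>Noncommutative polynomials in K<x_0,...,x_{m-1}>: finitely supported maps
  from words (lists of variable indices) to coefficients.\<close>
type_synonym 'a ncpoly = "nat list \<Rightarrow>\<^sub>0 'a"

definition nc_vars :: "nat \<Rightarrow> 'a::zero ncpoly \<Rightarrow> bool" where
  "nc_vars m p \<longleftrightarrow> (\<forall>w \<in> Poly_Mapping.keys p. set w \<subseteq> {..<m})"

definition word_prod :: "nat \<Rightarrow> (nat \<Rightarrow> 'a::comm_ring_1 mat) \<Rightarrow> nat list \<Rightarrow> 'a mat" where
  "word_prod n a w = foldr (\<lambda>i M. a i * M) w (1\<^sub>m n)"

definition nc_eval :: "nat \<Rightarrow> 'a::comm_ring_1 ncpoly \<Rightarrow> (nat \<Rightarrow> 'a mat) \<Rightarrow> 'a mat" where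
  "nc_eval n p a = mat n n (\<lambda>(i,j). \<Sum>w\<in>Poly_Mapping.keys p. Poly_Mapping.lookup p w * (word_prod n a w) $$ (i,j))"

definition UT :: "nat \<Rightarrow> 'a::comm_ring_1 mat set" where
  "UT n = {A \<in> carrier_mat n n. upper_triangular A}"

definition UT_pow :: "nat \<Rightarrow> nat \<Rightarrow> 'a::comm_ring_1 mat set" where
  "UT_pow n t = {A \<in> carrier_mat n n. \<forall>i<n. \<forall>j<n. int j - int i \<le> int t \<longrightarrow> A $$ (i,j) = 0}"

definition nc_image :: "nat \<Rightarrow> nat \<Rightarrow> 'a::comm_ring_1 ncpoly \<Rightarrow> 'a mat set" where
  "nc_image m n p = {nc_eval n p a | a. \<forall>i<m. a i \<in> UT n}"

definition nc_vanishes :: "nat \<Rightarrow> nat \<Rightarrow> 'a::comm_ring_1 ncpoly \<Rightarrow> bool" where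
  "nc_vanishes m n p \<longleftrightarrow> nc_image m n p = {0\<^sub>m n n}"

text \<open>ord(p) = r (T_1(K) identified with K).\<close>
definition nc_has_order :: "nat \<Rightarrow> 'a::comm_ring_1 ncpoly \<Rightarrow> nat \<Rightarrow> bool" where
  "nc_has_order m p r \<longleftrightarrow>
     (if r = 0 then \<not> nc_vanishes m 1 p
      else nc_vanishes m 1 p \<and>
        (r = (LEAST s. 0 < s \<and> nc_vanishes m s p \<and> \<not> nc_vanishes m (s+1) p)) \<and>
        nc_vanishes m r p \<and> \<not> nc_vanishes m (r+1) p)"

end

theory Submission
  imports Defs "HOL-Computational_Algebra.Polynomial" "Jordan_Normal_Form.Gauss_Jordan_Elimination"
begin

text \<open>Restricting evaluations to diagonal blocks shows that \<open>p\<close> vanishes on every \<open>T\<^sub>s\<close> with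
  \<open>s \<le> r\<close>, hence \<open>p(T\<^sub>n) \<subseteq> T\<^sub>n\<^sup>(\<^sup>r\<^sup>-\<^sup>1\<^sup>)\<close>. As \<open>p\<close> does not vanish on \<open>T\<^sub>r\<^sub>+\<^sub>1\<close>, some evaluation there
  has a nonzero corner entry; planting it along the diagonal and using that the field is infinite
  yields an evaluation on \<open>T\<^sub>n\<close> whose whole \<open>r\<close>-th superdiagonal is nonzero.
  The image is closed under conjugation by invertible upper triangular matrices: diagonal
  conjugation then prescribes any nonzero \<open>r\<close>-th superdiagonal, and transvections clear the higher
  diagonals one entry at a time. So \<open>p(T\<^sub>n)\<close> contains every matrix of \<open>T\<^sub>n\<^sup>(\<^sup>r\<^sup>-\<^sup>1\<^sup>)\<close> with nonzero
  \<open>r\<close>-th superdiagonal, and every matrix of \<open>T\<^sub>n\<^sup>(\<^sup>r\<^sup>-\<^sup>1\<^sup>)\<close> is a sum of two of these.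
  For \<open>n = r + 2\<close> the remaining matrices are reached from the corner witness on \<open>T\<^sub>r\<^sub>+\<^sub>1\<close>
  with a zero row and column inserted, again by conjugation.\<close>

section \<open>Evaluations of noncommutative polynomials\<close>

lemma index_mult_mat_sum:
  assumes "A \<in> carrier_mat n n" "B \<in> carrier_mat n n" "i < n" "j < n"
  shows "(A * B) $$ (i,j) = (\<Sum>z<n. A $$ (i,z) * B $$ (z,j))"
  using assms by (auto simp: scalar_prod_def lessThan_atLeast0 intro!: sum.cong)

lemma word_prod_Nil[simp]: "word_prod n a [] = 1\<^sub>m n"
  by (simp add: word_prod_def)

lemma word_prod_Cons[simp]: "word_prod n a (k # w) = a k * word_prod n a w"
  by (simp add: word_prod_def)

lemma word_prod_carrier:
  "\<forall>i\<in>set w. a i \<in> carrier_mat n n \<Longrightarrow> word_prod n a w \<in> carrier_mat n n"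
  by (induction w) auto

lemma word_prod_cong:
  "\<forall>i\<in>set w. a i = b i \<Longrightarrow> word_prod n a w = word_prod n b w"
  by (induction w) auto

lemma nc_eval_carrier[simp]: "nc_eval n p a \<in> carrier_mat n n"
  by (simp add: nc_eval_def)

lemma nc_eval_dim[simp]: "dim_row (nc_eval n p a) = n" "dim_col (nc_eval n p a) = n"
  by (simp_all add: nc_eval_def)

lemma nc_eval_entry:
  "i < n \<Longrightarrow> j < n \<Longrightarrow> nc_eval n p a $$ (i,j) =
    (\<Sum>w\<in>Poly_Mapping.keys p. Poly_Mapping.lookup p w * word_prod n a w $$ (i,j))"
  by (simp add: nc_eval_def)

lemma nc_vars_keys: "nc_vars m p \<Longrightarrow> w \<in> Poly_Mapping.keys p \<Longrightarrow> set w \<subseteq> {..<m}"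
  by (auto simp: nc_vars_def)

lemma nc_eval_cong:
  assumes "nc_vars m p" "\<forall>i<m. a i = b i"
  shows "nc_eval n p a = nc_eval n p b"
proof -
  have "word_prod n a w = word_prod n b w" if "w \<in> Poly_Mapping.keys p" for w
    using assms nc_vars_keys[OF assms(1) that] by (intro word_prod_cong) auto
  then show ?thesis by (simp add: nc_eval_def)
qed

lemma UT_iff: "A \<in> UT n \<longleftrightarrow> A \<in> carrier_mat n n \<and> (\<forall>i<n. \<forall>j<i. A $$ (i,j) = 0)"
  by (auto simp: UT_def upper_triangular_def)

lemma UT_one: "1\<^sub>m n \<in> UT n"
  by (auto simp: UT_iff)

lemma UT_mult:
  assumes "A \<in> UT n" "B \<in> UT n"
  shows "A * B \<in> UT n"
  unfolding UT_iff
proof (intro conjI allI impI)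
  have c: "A \<in> carrier_mat n n" "B \<in> carrier_mat n n" using assms by (auto simp: UT_iff)
  then show "A * B \<in> carrier_mat n n" by auto
  fix i j assume ij: "i < n" "j < i"
  have "A $$ (i,z) * B $$ (z,j) = 0" if "z < n" for z
    using assms ij that by (cases "z < i") (auto simp: UT_iff)
  then show "(A * B) $$ (i,j) = 0"
    using ij by (simp add: index_mult_mat_sum[OF c] del: index_mult_mat)
qed

lemma word_prod_UT: "\<forall>i\<in>set w. a i \<in> UT n \<Longrightarrow> word_prod n a w \<in> UT n"
  by (induction w) (auto intro: UT_mult UT_one)

lemma nc_eval_UT:
  assumes "nc_vars m p" "\<forall>i<m. a i \<in> UT n"
  shows "nc_eval n p a \<in> UT n"
  unfolding UT_iff
proof (intro conjI allI impI)
  fix i j assume ij: "i < n" "j < i"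
  have "word_prod n a w $$ (i,j) = 0" if "w \<in> Poly_Mapping.keys p" for w
    using word_prod_UT[of w a n] nc_vars_keys[OF assms(1) that] assms(2) ij by (auto simp: UT_iff)
  then show "nc_eval n p a $$ (i,j) = 0" using ij by (simp add: nc_eval_entry)
qed simp

lemma nc_eval_in_nc_image: "\<forall>i<m. a i \<in> UT n \<Longrightarrow> nc_eval n p a \<in> nc_image m n p"
  unfolding nc_image_def by blast

lemma UT_pow_zero:
  "Y \<in> UT_pow n t \<Longrightarrow> x < n \<Longrightarrow> y < n \<Longrightarrow> int y - int x \<le> int t \<Longrightarrow> Y $$ (x,y) = 0"
  by (auto simp: UT_pow_def)

section \<open>Diagonal blocks and the inclusion into \<open>T\<^sub>n\<^sup>(\<^sup>r\<^sup>-\<^sup>1\<^sup>)\<close>\<close>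

definition diag_block :: "nat \<Rightarrow> nat \<Rightarrow> 'a mat \<Rightarrow> 'a mat" where
  "diag_block x k M = mat k k (\<lambda>(i,j). M $$ (x+i, x+j))"

lemma diag_block_carrier[simp]: "diag_block x k M \<in> carrier_mat k k"
  by (simp add: diag_block_def)

lemma diag_block_dim[simp]: "dim_row (diag_block x k M) = k" "dim_col (diag_block x k M) = k"
  by (simp_all add: diag_block_def)

lemma diag_block_entry[simp]: "i < k \<Longrightarrow> j < k \<Longrightarrow> diag_block x k M $$ (i,j) = M $$ (x+i, x+j)"
  by (simp add: diag_block_def)

lemma diag_block_UT: "A \<in> UT n \<Longrightarrow> x + k \<le> n \<Longrightarrow> diag_block x k A \<in> UT k"
  by (auto simp: UT_iff)

lemma diag_block_one: "x + k \<le> n \<Longrightarrow> diag_block x k (1\<^sub>m n) = 1\<^sub>m k"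
  by (intro eq_matI) auto

text \<open>Entries to the left of the block vanish in the first factor, those below it in the second.\<close>
lemma diag_block_mult:
  fixes A B :: "'a::comm_ring_1 mat"
  assumes "A \<in> UT n" "B \<in> UT n" "x + k \<le> n"
  shows "diag_block x k (A * B) = diag_block x k A * diag_block x k B"
proof (intro eq_matI)
  have c: "A \<in> carrier_mat n n" "B \<in> carrier_mat n n" using assms by (auto simp: UT_iff)
  fix i j assume "i < dim_row (diag_block x k A * diag_block x k B)"
    "j < dim_col (diag_block x k A * diag_block x k B)"
  then have ij: "i < k" "j < k" by auto
  have outside: "A $$ (x+i,z) * B $$ (z,x+j) = 0" if "z \<in> {..<n} - {x..<x+k}" for z
    using assms ij that by (cases "z < x") (auto simp: UT_iff)
  have "diag_block x k (A * B) $$ (i,j) = (\<Sum>z<n. A $$ (x+i,z) * B $$ (z,x+j))"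
    using ij assms by (simp add: index_mult_mat_sum[OF c] del: index_mult_mat)
  also have "\<dots> = (\<Sum>z\<in>{x..<x+k}. A $$ (x+i,z) * B $$ (z,x+j))"
    using assms(3) outside by (intro sum.mono_neutral_right) auto
  also have "\<dots> = (\<Sum>z<k. A $$ (x+i,x+z) * B $$ (x+z,x+j))"
    by (rule sum.reindex_bij_witness[of _ "\<lambda>z. x + z" "\<lambda>z. z - x"]) auto
  also have "\<dots> = (diag_block x k A * diag_block x k B) $$ (i,j)"
    using ij by (simp add: index_mult_mat_sum[OF diag_block_carrier diag_block_carrier] del: index_mult_mat)
  finally show "diag_block x k (A * B) $$ (i,j) = (diag_block x k A * diag_block x k B) $$ (i,j)" .
qed auto

lemma diag_block_word_prod:
  fixes a :: "nat \<Rightarrow> 'a::comm_ring_1 mat"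
  assumes "\<forall>i\<in>set w. a i \<in> UT n" "x + k \<le> n"
  shows "diag_block x k (word_prod n a w) = word_prod k (\<lambda>i. diag_block x k (a i)) w"
  using assms
proof (induction w)
  case Nil
  then show ?case by (simp add: diag_block_one)
next
  case (Cons i w)
  then have "word_prod n a w \<in> UT n" by (intro word_prod_UT) auto
  with Cons show ?case using diag_block_mult[of "a i" n "word_prod n a w" x k] by simp
qed

lemma diag_block_nc_eval:
  fixes a :: "nat \<Rightarrow> 'a::comm_ring_1 mat"
  assumes "nc_vars m p" "\<forall>i<m. a i \<in> UT n" "x + k \<le> n"
  shows "diag_block x k (nc_eval n p a) = nc_eval k p (\<lambda>i. diag_block x k (a i))"
proof (intro eq_matI)
  fix i j assume "i < dim_row (nc_eval k p (\<lambda>i. diag_block x k (a i)))"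
    "j < dim_col (nc_eval k p (\<lambda>i. diag_block x k (a i)))"
  then have ij: "i < k" "j < k" by auto
  have "word_prod n a w $$ (x+i,x+j) = word_prod k (\<lambda>i. diag_block x k (a i)) w $$ (i,j)"
    if "w \<in> Poly_Mapping.keys p" for w
    using diag_block_word_prod[of w a n x k] nc_vars_keys[OF assms(1) that] assms(2,3) ij
    by (metis diag_block_entry lessThan_iff subsetD)
  then show "diag_block x k (nc_eval n p a) $$ (i,j) = nc_eval k p (\<lambda>i. diag_block x k (a i)) $$ (i,j)"
    using ij assms(3) by (simp add: nc_eval_entry)
qed auto

lemma nc_eval_entry_diag_block:
  fixes a :: "nat \<Rightarrow> 'a::comm_ring_1 mat"
  assumes "nc_vars m p" "\<forall>i<m. a i \<in> UT n" "x + k \<le> n" "i < k" "j < k"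
  shows "nc_eval n p a $$ (x+i,x+j) = nc_eval k p (\<lambda>i. diag_block x k (a i)) $$ (i,j)"
  using diag_block_nc_eval[OF assms(1-3)] assms(4,5) by (metis diag_block_entry)

lemma nc_vanishes_le:
  fixes p :: "'a::comm_ring_1 ncpoly"
  assumes "nc_vars m p" "nc_vanishes m r p" "s \<le> r" "\<forall>i<m. a i \<in> UT s"
  shows "nc_eval s p a = 0\<^sub>m s s"
proof -
  define b where "b i = mat r r (\<lambda>(u,v). if u < s \<and> v < s then a i $$ (u,v) else 0)" for i
  have b: "\<forall>i<m. b i \<in> UT r"
    using assms(4) by (auto simp: UT_iff b_def)
  have "\<forall>i<m. diag_block 0 s (b i) = a i"
    using assms(3,4) by (auto simp: UT_iff b_def intro!: eq_matI)
  then have "nc_eval s p a = nc_eval s p (\<lambda>i. diag_block 0 s (b i))"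
    using assms(1) by (intro nc_eval_cong) auto
  also have "\<dots> = diag_block 0 s (nc_eval r p b)"
    using assms b by (intro diag_block_nc_eval[symmetric]) auto
  also have "nc_eval r p b = 0\<^sub>m r r"
    using assms(2) nc_eval_in_nc_image[OF b] unfolding nc_vanishes_def by blast
  also have "diag_block 0 s (0\<^sub>m r r) = 0\<^sub>m s s"
    using assms(3) by (intro eq_matI) auto
  finally show ?thesis .
qed

text \<open>The entry \<open>(i,j)\<close> of an evaluation is the corner entry of the evaluation on the
  diagonal block spanned by rows \<open>i..j\<close>, of size \<open>j - i + 1\<close>.\<close>
lemma nc_eval_in_UT_pow:
  fixes p :: "'a::comm_ring_1 ncpoly"
  assumes "nc_vars m p" "nc_vanishes m r p" "1 \<le> r" "\<forall>i<m. a i \<in> UT n"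
  shows "nc_eval n p a \<in> UT_pow n (r - 1)"
  unfolding UT_pow_def
proof (intro CollectI conjI allI impI)
  fix i j assume ij: "i < n" "j < n" "int j - int i \<le> int (r - 1)"
  show "nc_eval n p a $$ (i,j) = 0"
  proof (cases "j < i")
    case True
    then show ?thesis using nc_eval_UT[OF assms(1,4)] ij by (auto simp: UT_iff)
  next
    case False
    define k where "k = j - i + 1"
    have k: "i + k \<le> n" "k \<le> r" "j = i + (j - i)" "j - i < k"
      using ij False assms(3) by (auto simp: k_def)
    have "nc_eval n p a $$ (i + 0, i + (j - i)) = nc_eval k p (\<lambda>l. diag_block i k (a l)) $$ (0, j - i)"
      using k assms by (intro nc_eval_entry_diag_block) auto
    also have "nc_eval k p (\<lambda>l. diag_block i k (a l)) = 0\<^sub>m k k"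
      using assms k by (intro nc_vanishes_le[where r=r]) (auto intro: diag_block_UT)
    finally show ?thesis using k by simp
  qed
qed simp

lemma nc_image_subset_UT_pow:
  fixes p :: "'a::comm_ring_1 ncpoly"
  assumes "nc_vars m p" "nc_vanishes m r p" "1 \<le> r"
  shows "nc_image m n p \<subseteq> UT_pow n (r - 1)"
  using nc_eval_in_UT_pow[OF assms] unfolding nc_image_def by blast

lemma nc_not_vanishes_Suc_corner:
  fixes p :: "'a::comm_ring_1 ncpoly"
  assumes "nc_vars m p" "nc_vanishes m r p" "1 \<le> r" "\<not> nc_vanishes m (r+1) p"
  shows "\<exists>a. (\<forall>i<m. a i \<in> UT (r+1)) \<and> nc_eval (r+1) p a $$ (0,r) \<noteq> 0"
proof -
  have "nc_image m (r+1) p \<noteq> {}"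
    using nc_eval_in_nc_image[of m "\<lambda>_. 1\<^sub>m (r+1)" "r+1" p] UT_one by blast
  with assms(4) have "\<not> nc_image m (r+1) p \<subseteq> {0\<^sub>m (r+1) (r+1)}"
    unfolding nc_vanishes_def by (simp add: subset_singleton_iff)
  then obtain a where a: "\<forall>i<m. a i \<in> UT (r+1)" and nz: "nc_eval (r+1) p a \<noteq> 0\<^sub>m (r+1) (r+1)"
    unfolding nc_image_def by auto
  have UTp: "nc_eval (r+1) p a \<in> UT_pow (r+1) (r - 1)"
    using assms a by (intro nc_eval_in_UT_pow) auto
  have "nc_eval (r+1) p a $$ (0,r) \<noteq> 0"
  proof
    assume corner: "nc_eval (r+1) p a $$ (0,r) = 0"
    have "nc_eval (r+1) p a $$ (i,j) = 0" if ij: "i < r+1" "j < r+1" for i j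
    proof (cases "i = 0 \<and> j = r")
      case False
      then have "int j - int i \<le> int (r - 1)" using ij by auto
      then show ?thesis using UT_pow_zero[OF UTp ij] by blast
    qed (use corner in simp)
    then have "nc_eval (r+1) p a = 0\<^sub>m (r+1) (r+1)" by (intro eq_matI) auto
    with nz show False ..
  qed
  with a show ?thesis by blast
qed


section \<open>An evaluation with nonzero \<open>r\<close>-th superdiagonal\<close>

lemma word_prod_pencil_poly:
  fixes A C :: "nat \<Rightarrow> 'a::comm_ring_1 mat"
  assumes "\<forall>i\<in>set w. A i \<in> carrier_mat n n \<and> C i \<in> carrier_mat n n"
  shows "\<exists>Q. \<forall>t u v. u < n \<longrightarrow> v < n \<longrightarrow>
    word_prod n (\<lambda>i. A i + t \<cdot>\<^sub>m C i) w $$ (u,v) = poly (Q u v) t"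
  using assms
proof (induction w)
  case Nil
  show ?case by (rule exI[of _ "\<lambda>u v. [:of_bool (u = v):]"]) auto
next
  case (Cons k w)
  then obtain Q where Q: "\<And>t u v. u < n \<Longrightarrow> v < n \<Longrightarrow>
      word_prod n (\<lambda>i. A i + t \<cdot>\<^sub>m C i) w $$ (u,v) = poly (Q u v) t"
    by auto
  have k: "A k \<in> carrier_mat n n" "C k \<in> carrier_mat n n" using Cons.prems by auto
  show ?case
  proof (intro exI allI impI)
    fix t u v assume uv: "u < n" "v < n"
    have c1: "A k + t \<cdot>\<^sub>m C k \<in> carrier_mat n n" using k by auto
    have c2: "word_prod n (\<lambda>i. A i + t \<cdot>\<^sub>m C i) w \<in> carrier_mat n n"
      using Cons.prems by (intro word_prod_carrier) auto
    have "word_prod n (\<lambda>i. A i + t \<cdot>\<^sub>m C i) (k # w) $$ (u,v)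
        = (\<Sum>z<n. (A k $$ (u,z) + t * C k $$ (u,z)) * poly (Q z v) t)"
      using uv k by (simp add: index_mult_mat_sum[OF c1 c2] Q del: index_mult_mat)
    also have "\<dots> = poly (\<Sum>z<n. [:A k $$ (u,z), C k $$ (u,z):] * Q z v) t"
      by (simp add: poly_sum algebra_simps)
    finally show "word_prod n (\<lambda>i. A i + t \<cdot>\<^sub>m C i) (k # w) $$ (u,v)
        = poly (\<Sum>z<n. [:A k $$ (u,z), C k $$ (u,z):] * Q z v) t" .
  qed
qed

lemma nc_eval_pencil_poly:
  fixes A C :: "nat \<Rightarrow> 'a::comm_ring_1 mat"
  assumes "nc_vars m p" "\<forall>i<m. A i \<in> carrier_mat n n \<and> C i \<in> carrier_mat n n" "u < n" "v < n"
  shows "\<exists>q. \<forall>t. nc_eval n p (\<lambda>i. A i + t \<cdot>\<^sub>m C i) $$ (u,v) = poly q t"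
proof -
  have "\<exists>Q. \<forall>t. word_prod n (\<lambda>i. A i + t \<cdot>\<^sub>m C i) w $$ (u,v) = poly Q t"
    if "w \<in> Poly_Mapping.keys p" for w
    using word_prod_pencil_poly[of w A n C] nc_vars_keys[OF assms(1) that] assms(2-4) by fast
  then obtain Q where Q: "\<And>w t. w \<in> Poly_Mapping.keys p \<Longrightarrow>
      word_prod n (\<lambda>i. A i + t \<cdot>\<^sub>m C i) w $$ (u,v) = poly (Q w) t"
    by metis
  have "nc_eval n p (\<lambda>i. A i + t \<cdot>\<^sub>m C i) $$ (u,v)
      = poly (\<Sum>w\<in>Poly_Mapping.keys p. smult (Poly_Mapping.lookup p w) (Q w)) t" for t
    using assms(3,4) by (simp add: nc_eval_entry poly_sum Q)
  then show ?thesis by blast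
qed

lemma ex_common_nonroot:
  fixes q :: "'b \<Rightarrow> 'a::idom poly"
  assumes "infinite (UNIV :: 'a set)" "finite S" "\<forall>x\<in>S. q x \<noteq> 0"
  shows "\<exists>t. \<forall>x\<in>S. poly (q x) t \<noteq> 0"
proof -
  have "finite (\<Union>x\<in>S. {t. poly (q x) t = 0})"
    using assms(2,3) by (auto intro: poly_roots_finite)
  then obtain t where "t \<notin> (\<Union>x\<in>S. {t. poly (q x) t = 0})"
    using ex_new_if_finite[OF assms(1)] by blast
  then show ?thesis by blast
qed

definition patch_block :: "nat \<Rightarrow> 'a mat \<Rightarrow> 'a mat \<Rightarrow> 'a mat" where
  "patch_block x M N = mat (dim_row M) (dim_col M) (\<lambda>(u,v).
     if x \<le> u \<and> u < x + dim_row N \<and> x \<le> v \<and> v < x + dim_row N then N $$ (u - x, v - x) else M $$ (u,v))"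

lemma patch_block_UT:
  assumes "M \<in> UT n" "N \<in> UT k" "x + k \<le> n"
  shows "patch_block x M N \<in> UT n"
  using assms by (auto simp: UT_iff patch_block_def)

lemma diag_block_patch_block:
  assumes "M \<in> carrier_mat n n" "N \<in> carrier_mat k k" "x + k \<le> n"
  shows "diag_block x k (patch_block x M N) = N"
  using assms by (intro eq_matI) (auto simp: patch_block_def)

text \<open>Along the pencil from \<open>A\<close> to the matrices with the witness \<open>a\<^sub>0\<close> planted at rows
  \<open>j..j+r\<close>, the superdiagonal entries in rows \<open>\<le> j\<close> are nonzero polynomials in the parameter
  (nonzero at \<open>0\<close> for rows \<open>< j\<close>, at \<open>1\<close> for row \<open>j\<close>); an infinite field avoids all their roots.\<close>
lemma nc_eval_superdiag_step:
  fixes p :: "'a::field ncpoly"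
  assumes vars: "nc_vars m p" and inf: "infinite (UNIV :: 'a set)"
    and a0: "\<forall>i<m. a0 i \<in> UT (r+1)" and corner: "nc_eval (r+1) p a0 $$ (0,r) \<noteq> 0"
    and A: "\<forall>i<m. A i \<in> UT n" "\<forall>x<j. nc_eval n p A $$ (x,x+r) \<noteq> 0" and j: "j + r < n"
  shows "\<exists>A'. (\<forall>i<m. A' i \<in> UT n) \<and> (\<forall>x\<le>j. nc_eval n p A' $$ (x,x+r) \<noteq> 0)"
proof -
  define B where "B i = patch_block j (A i) (a0 i)" for i
  have B: "\<forall>i<m. B i \<in> UT n"
    using A a0 j unfolding B_def by (auto intro: patch_block_UT)
  define L where "L t i = A i + t \<cdot>\<^sub>m (B i - A i)" for t i
  have L: "\<forall>i<m. L t i \<in> UT n" for t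
  proof (intro allI impI)
    fix i assume "i < m"
    then have "A i \<in> UT n" "B i \<in> UT n" using A B by auto
    moreover from this have "L t i \<in> carrier_mat n n"
      unfolding L_def UT_iff by (metis add_carrier_mat minus_carrier_mat smult_carrier_mat)
    ultimately show "L t i \<in> UT n" by (auto simp: UT_iff L_def)
  qed
  have L01: "L 0 i = A i" "L 1 i = B i" if "i < m" for i
  proof -
    have "A i \<in> carrier_mat n n" "B i \<in> carrier_mat n n" using A B that by (auto simp: UT_iff)
    then have "dim_row (A i) = n" "dim_col (A i) = n" "dim_row (B i) = n" "dim_col (B i) = n" by auto
    then show "L 0 i = A i" "L 1 i = B i" unfolding L_def by (auto intro!: eq_matI)
  qed
  have car: "\<forall>i<m. A i \<in> carrier_mat n n \<and> B i - A i \<in> carrier_mat n n"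
    using A B unfolding UT_iff by (metis minus_carrier_mat)
  have "\<exists>q. (\<forall>t. nc_eval n p (L t) $$ (x,x+r) = poly q t) \<and> q \<noteq> 0" if x: "x \<le> j" for x
  proof -
    obtain q where q: "\<And>t. nc_eval n p (L t) $$ (x,x+r) = poly q t"
      using nc_eval_pencil_poly[OF vars car, of x "x+r"] x j unfolding L_def by auto
    have "poly q 0 \<noteq> 0 \<or> poly q 1 \<noteq> 0"
    proof (cases "x < j")
      case True
      have "nc_eval n p (L 0) = nc_eval n p A"
        using L01 by (intro nc_eval_cong[OF vars]) auto
      then show ?thesis using q[of 0] A(2) True by auto
    next
      case False
      then have x: "x = j" using x by simp
      have "nc_eval n p (L 1) = nc_eval n p B"
        using L01 by (intro nc_eval_cong[OF vars]) auto
      also have "nc_eval n p B $$ (j + 0, j + r) = nc_eval (r+1) p (\<lambda>i. diag_block j (r+1) (B i)) $$ (0,r)"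
        using j by (intro nc_eval_entry_diag_block[OF vars B]) auto
      also have "nc_eval (r+1) p (\<lambda>i. diag_block j (r+1) (B i)) = nc_eval (r+1) p a0"
        using A a0 j by (intro nc_eval_cong[OF vars]) (auto simp: B_def UT_iff diag_block_patch_block)
      finally show ?thesis using q[of 1] corner x by auto
    qed
    then have "q \<noteq> 0" by auto
    with q show ?thesis by blast
  qed
  then obtain q where q: "\<And>x t. x \<le> j \<Longrightarrow> nc_eval n p (L t) $$ (x,x+r) = poly (q x) t"
    and q0: "\<And>x. x \<le> j \<Longrightarrow> q x \<noteq> 0"
    by metis
  obtain t where "\<forall>x\<in>{..j}. poly (q x) t \<noteq> 0"
    using ex_common_nonroot[OF inf, of "{..j}" q] q0 by auto
  then show ?thesis using L q by (intro exI[of _ "L t"]) auto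
qed

lemma nc_eval_superdiag_nonzero:
  fixes p :: "'a::field ncpoly"
  assumes vars: "nc_vars m p" and inf: "infinite (UNIV :: 'a set)"
    and a0: "\<forall>i<m. a0 i \<in> UT (r+1)" and corner: "nc_eval (r+1) p a0 $$ (0,r) \<noteq> 0"
  shows "\<exists>A. (\<forall>i<m. A i \<in> UT n) \<and> (\<forall>x. x + r < n \<longrightarrow> nc_eval n p A $$ (x,x+r) \<noteq> 0)"
proof (cases "r \<le> n")
  case True
  have "\<exists>A. (\<forall>i<m. A i \<in> UT n) \<and> (\<forall>x<j. nc_eval n p A $$ (x,x+r) \<noteq> 0)" if "j + r \<le> n" for j
    using that
  proof (induction j)
    case 0
    show ?case by (intro exI[of _ "\<lambda>_. 1\<^sub>m n"]) (simp add: UT_one)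
  next
    case (Suc j)
    then obtain A where "\<forall>i<m. A i \<in> UT n" "\<forall>x<j. nc_eval n p A $$ (x,x+r) \<noteq> 0" by auto
    with nc_eval_superdiag_step[OF vars inf a0 corner] Suc.prems show ?case
      by (simp add: less_Suc_eq_le)
  qed
  from this[of "n - r"] True show ?thesis by auto
next
  case False
  then show ?thesis by (intro exI[of _ "\<lambda>_. 1\<^sub>m n"]) (simp add: UT_one)
qed


section \<open>Conjugation invariance of the image\<close>

lemma word_prod_conj:
  fixes a :: "nat \<Rightarrow> 'a::comm_ring_1 mat"
  assumes "\<forall>i\<in>set w. a i \<in> carrier_mat n n" "g \<in> carrier_mat n n" "h \<in> carrier_mat n n"
    "g * h = 1\<^sub>m n" "h * g = 1\<^sub>m n"
  shows "word_prod n (\<lambda>i. g * a i * h) w = g * word_prod n a w * h"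
  using assms(1)
proof (induction w)
  case Nil
  then show ?case using assms(2,4) by simp
next
  case (Cons k w)
  have W: "word_prod n a w \<in> carrier_mat n n" using Cons.prems by (intro word_prod_carrier) auto
  have ak: "a k \<in> carrier_mat n n" using Cons.prems by auto
  have "word_prod n (\<lambda>i. g * a i * h) (k # w) = g * a k * h * (g * word_prod n a w * h)"
    using Cons by simp
  also have "\<dots> = g * a k * (h * g) * word_prod n a w * h"
    using assms(2,3) ak W by (simp add: assoc_mult_mat[of _ n n _ n _ n])
  also have "\<dots> = g * (a k * word_prod n a w) * h"
    using assms(2,3,5) ak W by (simp add: assoc_mult_mat[of _ n n _ n _ n])
  finally show ?case by simp
qed

lemma triple_mult_index:
  assumes "g \<in> carrier_mat n n" "M \<in> carrier_mat n n" "h \<in> carrier_mat n n" "i < n" "j < n"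
  shows "(g * M * h) $$ (i,j) = (\<Sum>z<n. \<Sum>y<n. g $$ (i,y) * M $$ (y,z) * h $$ (z,j))"
proof -
  have gM: "g * M \<in> carrier_mat n n" using assms by auto
  show ?thesis using assms
    by (simp add: index_mult_mat_sum[OF gM assms(3)] index_mult_mat_sum[OF assms(1,2)] sum_distrib_right
        del: index_mult_mat assoc_mult_mat)
qed

lemma nc_eval_conj:
  fixes p :: "'a::comm_ring_1 ncpoly"
  assumes vars: "nc_vars m p" and a: "\<forall>i<m. a i \<in> carrier_mat n n"
    and gh: "g \<in> carrier_mat n n" "h \<in> carrier_mat n n" "g * h = 1\<^sub>m n" "h * g = 1\<^sub>m n"
  shows "nc_eval n p (\<lambda>i. g * a i * h) = g * nc_eval n p a * h"
proof (rule eq_matI)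
  fix i j assume "i < dim_row (g * nc_eval n p a * h)" "j < dim_col (g * nc_eval n p a * h)"
  then have ij: "i < n" "j < n" using gh by auto
  have W: "word_prod n (\<lambda>i. g * a i * h) w = g * word_prod n a w * h"
    "word_prod n a w \<in> carrier_mat n n" if "w \<in> Poly_Mapping.keys p" for w
    using a gh nc_vars_keys[OF vars that] by (auto intro!: word_prod_conj word_prod_carrier)
  let ?c = "Poly_Mapping.lookup p"
  have "nc_eval n p (\<lambda>i. g * a i * h) $$ (i,j)
      = (\<Sum>w\<in>Poly_Mapping.keys p. ?c w * (g * word_prod n a w * h) $$ (i,j))"
    using ij W by (simp add: nc_eval_entry)
  also have "\<dots> = (\<Sum>w\<in>Poly_Mapping.keys p. \<Sum>z<n. \<Sum>y<n.
      ?c w * (g $$ (i,y) * word_prod n a w $$ (y,z) * h $$ (z,j)))"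
    using ij W gh by (intro sum.cong refl)
      (simp add: triple_mult_index[OF gh(1) _ gh(2) ij] sum_distrib_left del: index_mult_mat assoc_mult_mat)
  also have "\<dots> = (\<Sum>z<n. \<Sum>y<n. \<Sum>w\<in>Poly_Mapping.keys p.
      ?c w * (g $$ (i,y) * word_prod n a w $$ (y,z) * h $$ (z,j)))"
    by (subst sum.swap, rule sum.cong, rule refl, rule sum.swap)
  also have "\<dots> = (\<Sum>z<n. \<Sum>y<n. g $$ (i,y) * nc_eval n p a $$ (y,z) * h $$ (z,j))"
    by (intro sum.cong refl) (simp add: nc_eval_entry sum_distrib_left sum_distrib_right mult_ac)
  also have "\<dots> = (g * nc_eval n p a * h) $$ (i,j)"
    using ij gh by (simp add: triple_mult_index[OF gh(1) _ gh(2) ij] del: index_mult_mat assoc_mult_mat)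
  finally show "nc_eval n p (\<lambda>i. g * a i * h) $$ (i,j) = (g * nc_eval n p a * h) $$ (i,j)" .
qed (use gh in auto)

lemma nc_image_conj:
  fixes p :: "'a::comm_ring_1 ncpoly"
  assumes vars: "nc_vars m p" and Y: "Y \<in> nc_image m n p"
    and gh: "g \<in> UT n" "h \<in> UT n" "g * h = 1\<^sub>m n" "h * g = 1\<^sub>m n"
  shows "g * Y * h \<in> nc_image m n p"
proof -
  obtain a where a: "Y = nc_eval n p a" "\<forall>i<m. a i \<in> UT n"
    using Y unfolding nc_image_def by blast
  have "g * Y * h = nc_eval n p (\<lambda>i. g * a i * h)"
    using a gh by (simp add: nc_eval_conj[OF vars] UT_iff)
  moreover have "\<forall>i<m. g * a i * h \<in> UT n" using a gh by (auto intro!: UT_mult)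
  ultimately show ?thesis by (simp add: nc_eval_in_nc_image)
qed

lemma addrow_mat_UT: "k < l \<Longrightarrow> addrow_mat n t k l \<in> UT n"
  by (auto simp: UT_iff)

lemma mult_addrow_mat_index:
  fixes Y :: "'a::comm_ring_1 mat"
  assumes "Y \<in> carrier_mat n n" "x < n" "y < n" "k < n"
  shows "(Y * addrow_mat n t k l) $$ (x,y) = Y $$ (x,y) + (if y = l then t * Y $$ (x,k) else 0)"
proof -
  have "(Y * addrow_mat n t k l) $$ (x,y) = (\<Sum>z<n. Y $$ (x,z) * addrow_mat n t k l $$ (z,y))"
    using assms by (simp add: index_mult_mat_sum del: index_mult_mat)
  also have "\<dots> = (\<Sum>z<n. (if z = y then Y $$ (x,y) else 0) + (if z = k \<and> y = l then t * Y $$ (x,k) else 0))"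
    using assms by (intro sum.cong) (auto simp: algebra_simps)
  also have "\<dots> = Y $$ (x,y) + (if y = l then t * Y $$ (x,k) else 0)"
    using assms by (simp add: sum.distrib)
  finally show ?thesis .
qed

lemma addrow_mat_conj_index:
  fixes Y :: "'a::comm_ring_1 mat"
  assumes "Y \<in> carrier_mat n n" "x < n" "y < n" "k < n" "l < n"
  shows "(addrow_mat n t k l * Y * addrow_mat n (-t) k l) $$ (x,y) =
    Y $$ (x,y) + (if x = k then t * Y $$ (l,y) else 0)
    - (if y = l then t * (Y $$ (x,k) + (if x = k then t * Y $$ (l,k) else 0)) else 0)"
proof -
  have E: "addrow_mat n t k l * Y = addrow t k l Y" "addrow t k l Y \<in> carrier_mat n n"
    using assms(1,5) by (simp add: addrow_mat, simp)
  have "(addrow_mat n t k l * Y * addrow_mat n (-t) k l) $$ (x,y)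
      = addrow t k l Y $$ (x,y) + (if y = l then - t * addrow t k l Y $$ (x,k) else 0)"
    unfolding E(1) using mult_addrow_mat_index[OF E(2) assms(2-4)] by simp
  then show ?thesis using assms by (simp add: algebra_simps)
qed

lemma nc_image_addrow_conj:
  fixes p :: "'a::comm_ring_1 ncpoly"
  assumes "nc_vars m p" "Y \<in> nc_image m n p" "k < l" "l < n"
  shows "addrow_mat n t k l * Y * addrow_mat n (-t) k l \<in> nc_image m n p"
  using assms addrow_mat_inv[of k n l t] addrow_mat_inv[of k n l "-t"]
  by (intro nc_image_conj) (auto intro: addrow_mat_UT)

lemma mat_diag_UT: "mat_diag n d \<in> UT n"
  by (auto simp: UT_iff mat_diag_def)

lemma mat_diag_conj_index:
  assumes "Y \<in> carrier_mat n n" "x < n" "y < n"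
  shows "(mat_diag n d * Y * mat_diag n e) $$ (x,y) = d x * Y $$ (x,y) * e y"
  using assms by (simp add: mat_diag_mult_left mat_diag_mult_right[of _ n n])

lemma nc_image_mat_diag_conj:
  fixes p :: "'a::field ncpoly"
  assumes "nc_vars m p" "Y \<in> nc_image m n p" "\<forall>u<n. d u \<noteq> 0"
  shows "mat_diag n d * Y * mat_diag n (\<lambda>u. inverse (d u)) \<in> nc_image m n p"
proof -
  have "mat_diag n (\<lambda>u. d u * inverse (d u)) = 1\<^sub>m n"
    "mat_diag n (\<lambda>u. inverse (d u) * d u) = 1\<^sub>m n"
    using assms(3) by (auto simp: mat_diag_def intro!: eq_matI)
  then have "mat_diag n d * mat_diag n (\<lambda>u. inverse (d u)) = 1\<^sub>m n"
    "mat_diag n (\<lambda>u. inverse (d u)) * mat_diag n d = 1\<^sub>m n"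
    by simp_all
  then show ?thesis using assms by (intro nc_image_conj) (auto intro: mat_diag_UT)
qed


section \<open>Matrices with nonzero \<open>r\<close>-th superdiagonal lie in the image\<close>

text \<open>Entries are swept diagonal by diagonal, and within the \<open>s\<close>-th diagonal from the bottom
  row upwards: \<open>agree_upto n s i X Y\<close> says that \<open>Y\<close> agrees with \<open>X\<close> below the \<open>s\<close>-th diagonal
  and on its entries in rows \<open>\<ge> i\<close>.\<close>
definition agree_upto :: "nat \<Rightarrow> nat \<Rightarrow> nat \<Rightarrow> 'a mat \<Rightarrow> 'a mat \<Rightarrow> bool" where
  "agree_upto n s i X Y \<longleftrightarrow>
     (\<forall>x<n. \<forall>y<n. y < x + s \<or> (y = x + s \<and> i \<le> x) \<longrightarrow> Y $$ (x,y) = X $$ (x,y))"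

text \<open>The transvection adding \<open>t\<close> times row \<open>q = i + s - r\<close> to row \<open>i\<close> fixes everything below
  the \<open>s\<close>-th diagonal, and the pivot \<open>Y(q, i+s)\<close> on the \<open>r\<close>-th diagonal lets it set \<open>Y(i, i+s)\<close>.\<close>
lemma agree_upto_step:
  fixes X Y :: "'a::field mat"
  assumes vars: "nc_vars m p" and incl: "nc_image m n p \<subseteq> UT_pow n (r - 1)"
    and r: "1 \<le> r" "r < s" and i: "i + s < n"
    and X: "\<forall>x. x + r < n \<longrightarrow> X $$ (x,x+r) \<noteq> 0"
    and Y: "Y \<in> nc_image m n p" "agree_upto n s (Suc i) X Y"
  shows "\<exists>Y'\<in>nc_image m n p. agree_upto n s i X Y'"
proof -
  define q where "q = i + s - r"
  have q: "i < q" "q < n" "q + r = i + s" using r i by (auto simp: q_def)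
  have YU: "Y \<in> UT_pow n (r - 1)" using incl Y(1) by auto
  then have Yc: "Y \<in> carrier_mat n n" by (simp add: UT_pow_def)
  have Z: "Y $$ (x,y) = 0" if "x < n" "y < n" "y < x + r" for x y
    using UT_pow_zero[OF YU that(1,2)] that(3) by linarith
  have qr: "q + r < n" using q i by simp
  then have "Y $$ (q, q+r) = X $$ (q, q+r)"
    using Y(2) q(2) r(2) unfolding agree_upto_def by (metis add_less_cancel_left)
  then have pivot: "Y $$ (q, i+s) \<noteq> 0" using X qr q(3) by metis
  define t where "t = (X $$ (i,i+s) - Y $$ (i,i+s)) / Y $$ (q,i+s)"
  define Y' where "Y' = addrow_mat n t i q * Y * addrow_mat n (-t) i q"
  have Y': "Y' $$ (x,y) = Y $$ (x,y) + (if x = i then t * Y $$ (q,y) else 0)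
      - (if y = q then t * Y $$ (x,i) else 0)" if "x < n" "y < n" for x y
    using addrow_mat_conj_index[OF Yc that, of i q t] Z[of q i] q that unfolding Y'_def by auto
  have "agree_upto n s i X Y'"
    unfolding agree_upto_def
  proof (intro allI impI)
    fix x y assume xy: "x < n" "y < n" "y < x + s \<or> y = x + s \<and> i \<le> x"
    consider "y < x + s" | "x = i" "y = i + s" | "y = x + s" "Suc i \<le> x"
      using xy(3) by linarith
    then show "Y' $$ (x,y) = X $$ (x,y)"
    proof cases
      case 1
      then have "x = i \<longrightarrow> Y $$ (q,y) = 0" "y = q \<longrightarrow> Y $$ (x,i) = 0"
        using Z q xy by auto
      then show ?thesis using Y' xy 1 Y(2) unfolding agree_upto_def by auto
    next
      case 2
      then have "Y' $$ (x,y) = Y $$ (i,i+s) + t * Y $$ (q,i+s)" using Y' xy q r by auto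
      then show ?thesis using pivot 2 by (simp add: t_def field_simps)
    next
      case 3
      then show ?thesis using Y' xy Y(2) q unfolding agree_upto_def by auto
    qed
  qed
  moreover have "Y' \<in> nc_image m n p"
    unfolding Y'_def using q by (intro nc_image_addrow_conj[OF vars Y(1)])
  ultimately show ?thesis by blast
qed

lemma agree_upto_next_diag:
  fixes X :: "'a::field mat"
  assumes vars: "nc_vars m p" and incl: "nc_image m n p \<subseteq> UT_pow n (r - 1)"
    and r: "1 \<le> r" "r < s" and X: "\<forall>x. x + r < n \<longrightarrow> X $$ (x,x+r) \<noteq> 0"
    and Y: "\<exists>Y\<in>nc_image m n p. agree_upto n s n X Y"
  shows "\<exists>Y\<in>nc_image m n p. agree_upto n (Suc s) n X Y"
proof -
  have "\<exists>Y\<in>nc_image m n p. agree_upto n s i X Y" if "i \<le> n" for i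
    using that
  proof (induction rule: inc_induct)
    case base
    show ?case using Y .
  next
    case (step i)
    then obtain Y where Y: "Y \<in> nc_image m n p" "agree_upto n s (Suc i) X Y" by blast
    show ?case
    proof (cases "i + s < n")
      case True
      then show ?thesis using agree_upto_step[OF vars incl r True X Y] by blast
    next
      case False
      then have "agree_upto n s i X Y" using Y(2) by (auto simp: agree_upto_def)
      with Y(1) show ?thesis by blast
    qed
  qed
  then obtain Y where "Y \<in> nc_image m n p" "agree_upto n s 0 X Y" by blast
  moreover from this(2) have "agree_upto n (Suc s) n X Y"
    unfolding agree_upto_def by (metis add_Suc_right less_Suc_eq not_le zero_le)
  ultimately show ?thesis by blast
qed

lemma nc_image_of_superdiag_match:
  fixes X P :: "'a::field mat"
  assumes vars: "nc_vars m p" and incl: "nc_image m n p \<subseteq> UT_pow n (r - 1)" and r: "1 \<le> r"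
    and X: "X \<in> UT_pow n (r - 1)" "\<forall>x. x + r < n \<longrightarrow> X $$ (x,x+r) \<noteq> 0"
    and P: "P \<in> nc_image m n p" "\<forall>x. x + r < n \<longrightarrow> P $$ (x,x+r) = X $$ (x,x+r)"
  shows "X \<in> nc_image m n p"
proof -
  have PU: "P \<in> UT_pow n (r - 1)" using incl P(1) by auto
  have "agree_upto n (Suc r) n X P"
    unfolding agree_upto_def
  proof (intro allI impI)
    fix x y assume xy: "x < n" "y < n" "y < x + Suc r \<or> y = x + Suc r \<and> n \<le> x"
    show "P $$ (x,y) = X $$ (x,y)"
    proof (cases "y = x + r")
      case False
      then have "int y - int x \<le> int (r - 1)" using xy r by auto
      then show ?thesis using UT_pow_zero[OF PU] UT_pow_zero[OF X(1)] xy by simp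
    qed (use P(2) xy in auto)
  qed
  then have "\<exists>Y\<in>nc_image m n p. agree_upto n (Suc r + k) n X Y" for k
    using P(1) by (induction k) (auto intro: agree_upto_next_diag[OF vars incl r _ X(2)])
  then obtain Y where Y: "Y \<in> nc_image m n p" "agree_upto n (Suc r + n) n X Y" by blast
  have "Y = X"
  proof (rule eq_matI)
    show "dim_row Y = dim_row X" "dim_col Y = dim_col X"
      using incl Y(1) X(1) by (auto simp: UT_pow_def)
    fix x y assume "x < dim_row X" "y < dim_col X"
    then show "Y $$ (x,y) = X $$ (x,y)" using X(1) Y(2) by (auto simp: UT_pow_def agree_upto_def)
  qed
  with Y(1) show ?thesis by simp
qed

fun stride_prod :: "nat \<Rightarrow> (nat \<Rightarrow> 'a::comm_monoid_mult) \<Rightarrow> nat \<Rightarrow> 'a" where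
  "stride_prod r c x = (if r = 0 \<or> x < r then 1 else stride_prod r c (x - r) * c (x - r))"

declare stride_prod.simps[simp del]

lemma stride_prod_nonzero:
  fixes c :: "nat \<Rightarrow> 'a::idom"
  shows "\<forall>x. c x \<noteq> 0 \<Longrightarrow> stride_prod r c x \<noteq> 0"
  by (induction r c x rule: stride_prod.induct) (subst stride_prod.simps, auto)

lemma stride_prod_add: "0 < r \<Longrightarrow> stride_prod r c (x + r) = stride_prod r c x * c x"
  by (subst stride_prod.simps) simp

text \<open>Conjugating by \<open>diag(d)\<close> multiplies the entry \<open>(x, x+r)\<close> by \<open>d x / d (x+r)\<close>; products
  along the residue classes mod \<open>r\<close> realise any prescribed nonzero ratios.\<close>
lemma nc_image_of_superdiag_nonzero:
  fixes X P :: "'a::field mat"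
  assumes vars: "nc_vars m p" and incl: "nc_image m n p \<subseteq> UT_pow n (r - 1)" and r: "1 \<le> r"
    and P: "P \<in> nc_image m n p" "\<forall>x. x + r < n \<longrightarrow> P $$ (x,x+r) \<noteq> 0"
    and X: "X \<in> UT_pow n (r - 1)" "\<forall>x. x + r < n \<longrightarrow> X $$ (x,x+r) \<noteq> 0"
  shows "X \<in> nc_image m n p"
proof -
  define c where "c x = (if x + r < n then P $$ (x,x+r) / X $$ (x,x+r) else 1)" for x
  define d where "d = stride_prod r c"
  have d: "d x \<noteq> 0" for x
    unfolding d_def using P(2) X(2) by (intro stride_prod_nonzero) (auto simp: c_def)
  define Y where "Y = mat_diag n d * P * mat_diag n (\<lambda>u. inverse (d u))"
  have Pc: "P \<in> carrier_mat n n" using incl P(1) by (auto simp: UT_pow_def)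
  have "Y $$ (x,x+r) = X $$ (x,x+r)" if x: "x + r < n" for x
  proof -
    have "d (x + r) = d x * c x" unfolding d_def using r by (simp add: stride_prod_add)
    then have "Y $$ (x,x+r) = d x * P $$ (x,x+r) * inverse (d x * c x)"
      using x Pc by (simp add: Y_def mat_diag_conj_index del: index_mult_mat)
    then show ?thesis using d[of x] x P(2)[rule_format, OF x] X(2)[rule_format, OF x]
      by (simp add: c_def field_simps)
  qed
  moreover have "Y \<in> nc_image m n p"
    unfolding Y_def using vars P(1) d by (intro nc_image_mat_diag_conj) auto
  ultimately show ?thesis using nc_image_of_superdiag_match[OF vars incl r X] by blast
qed

lemma UT_pow_add: "A \<in> UT_pow n t \<Longrightarrow> B \<in> UT_pow n t \<Longrightarrow> A + B \<in> UT_pow n t"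
  by (auto simp: UT_pow_def)

lemma UT_pow_diff: "A \<in> UT_pow n t \<Longrightarrow> B \<in> UT_pow n t \<Longrightarrow> A - B \<in> UT_pow n t"
  by (auto simp: UT_pow_def)

text \<open>Subtract a matrix \<open>Y\<close> whose \<open>r\<close>-th diagonal avoids both \<open>0\<close> and the one of \<open>X\<close>;
  a third field element \<open>b\<close> is what makes that possible.\<close>
lemma sumset_eq_UT_pow:
  fixes S :: "'a::field mat set" and b :: 'a
  assumes incl: "S \<subseteq> UT_pow n (r - 1)" and r: "1 \<le> r" and b: "b \<noteq> 0" "b \<noteq> 1"
    and superdiag: "\<And>X. X \<in> UT_pow n (r - 1) \<Longrightarrow> \<forall>x. x + r < n \<longrightarrow> X $$ (x,x+r) \<noteq> 0 \<Longrightarrow> X \<in> S"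
  shows "{A + B | A B. A \<in> S \<and> B \<in> S} = UT_pow n (r - 1)"
proof (intro equalityI subsetI)
  fix M assume "M \<in> {A + B | A B. A \<in> S \<and> B \<in> S}"
  then show "M \<in> UT_pow n (r - 1)" using incl by (auto intro: UT_pow_add)
next
  fix X :: "'a mat" assume X: "X \<in> UT_pow n (r - 1)"
  define e where "e z = (if z = b then 1 else b)" for z :: 'a
  have e: "e z \<noteq> 0" "z \<noteq> e z" for z using b by (auto simp: e_def)
  define Y where "Y = mat n n (\<lambda>(x,y). if y = x + r then e (X $$ (x,y)) else 0)"
  have Y: "Y \<in> UT_pow n (r - 1)" using r by (auto simp: Y_def UT_pow_def)
  have "X - Y \<in> S"
    using X e by (intro superdiag UT_pow_diff[OF X Y]) (auto simp: Y_def UT_pow_def)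
  moreover have "Y \<in> S"
    using e by (intro superdiag Y) (auto simp: Y_def)
  moreover have "X = (X - Y) + Y"
    using X by (intro eq_matI) (auto simp: Y_def UT_pow_def)
  ultimately show "X \<in> {A + B | A B. A \<in> S \<and> B \<in> S}" by blast
qed


section \<open>The case \<open>n = r + 2\<close>\<close>

definition skip_index :: "nat \<Rightarrow> nat \<Rightarrow> nat" where
  "skip_index s l = (if l < s then l else Suc l)"

definition unskip_index :: "nat \<Rightarrow> nat \<Rightarrow> nat" where
  "unskip_index s u = (if u < s then u else u - 1)"

definition insert_zero_rowcol :: "nat \<Rightarrow> nat \<Rightarrow> 'a::zero mat \<Rightarrow> 'a mat" where
  "insert_zero_rowcol k s M = mat (Suc k) (Suc k)
     (\<lambda>(u,v). if u = s \<or> v = s then 0 else M $$ (unskip_index s u, unskip_index s v))"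

lemma unskip_skip_index[simp]: "unskip_index s (skip_index s l) = l"
  by (simp add: skip_index_def unskip_index_def)

lemma skip_index_neq[simp]: "skip_index s l \<noteq> s"
  by (simp add: skip_index_def)

lemma skip_unskip_index: "u \<noteq> s \<Longrightarrow> skip_index s (unskip_index s u) = u"
  by (auto simp: skip_index_def unskip_index_def)

lemma unskip_index_less: "u < Suc k \<Longrightarrow> u \<noteq> s \<Longrightarrow> s \<le> k \<Longrightarrow> unskip_index s u < k"
  by (auto simp: unskip_index_def)

lemma skip_index_less: "l < k \<Longrightarrow> skip_index s l < Suc k"
  by (auto simp: skip_index_def)

lemma insert_zero_rowcol_carrier[simp]: "insert_zero_rowcol k s M \<in> carrier_mat (Suc k) (Suc k)"
  by (simp add: insert_zero_rowcol_def)

lemma insert_zero_rowcol_dim[simp]: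
  "dim_row (insert_zero_rowcol k s M) = Suc k" "dim_col (insert_zero_rowcol k s M) = Suc k"
  by (simp_all add: insert_zero_rowcol_def)

lemma insert_zero_rowcol_index:
  "u < Suc k \<Longrightarrow> v < Suc k \<Longrightarrow> insert_zero_rowcol k s M $$ (u,v) =
    (if u = s \<or> v = s then 0 else M $$ (unskip_index s u, unskip_index s v))"
  by (simp add: insert_zero_rowcol_def)

lemma sum_lessThan_Suc_skip:
  fixes f :: "nat \<Rightarrow> 'a::comm_monoid_add"
  assumes "s \<le> k" "f s = 0"
  shows "(\<Sum>z<Suc k. f z) = (\<Sum>l<k. f (skip_index s l))"
proof -
  have "(\<Sum>z<Suc k. f z) = (\<Sum>z\<in>{..<Suc k} - {s}. f z)"
    using assms by (intro sum.mono_neutral_right) auto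
  also have "\<dots> = (\<Sum>l<k. f (skip_index s l))"
    by (rule sum.reindex_bij_witness[of _ "skip_index s" "unskip_index s"])
      (use assms in \<open>auto simp: skip_unskip_index unskip_index_less skip_index_less\<close>)
  finally show ?thesis .
qed

lemma insert_zero_rowcol_mult:
  fixes A B :: "'a::comm_ring_1 mat"
  assumes "A \<in> carrier_mat k k" "B \<in> carrier_mat k k" "s \<le> k"
  shows "insert_zero_rowcol k s (A * B) = insert_zero_rowcol k s A * insert_zero_rowcol k s B"
proof (rule eq_matI)
  let ?E = "insert_zero_rowcol k s"
  fix u v assume "u < dim_row (?E A * ?E B)" "v < dim_col (?E A * ?E B)"
  then have uv: "u < Suc k" "v < Suc k" by auto
  have "(?E A * ?E B) $$ (u,v) = (\<Sum>z<Suc k. ?E A $$ (u,z) * ?E B $$ (z,v))"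
    using uv by (simp add: index_mult_mat_sum[OF insert_zero_rowcol_carrier insert_zero_rowcol_carrier]
        del: index_mult_mat)
  also have "\<dots> = (\<Sum>l<k. ?E A $$ (u, skip_index s l) * ?E B $$ (skip_index s l, v))"
    using assms uv by (intro sum_lessThan_Suc_skip) (auto simp: insert_zero_rowcol_index)
  also have "\<dots> = ?E (A * B) $$ (u,v)"
  proof (cases "u = s \<or> v = s")
    case True
    then show ?thesis using uv by (auto simp: insert_zero_rowcol_index skip_index_less)
  next
    case False
    then have "unskip_index s u < k" "unskip_index s v < k" using uv assms unskip_index_less by auto
    then show ?thesis using False uv assms
      by (simp add: insert_zero_rowcol_index skip_index_less index_mult_mat_sum[OF assms(1,2)]
          del: index_mult_mat)
  qed
  finally show "?E (A * B) $$ (u,v) = (?E A * ?E B) $$ (u,v)" ..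
qed auto

lemma insert_zero_rowcol_UT:
  assumes "M \<in> UT k" "s \<le> k"
  shows "insert_zero_rowcol k s M \<in> UT (Suc k)"
  unfolding UT_iff
proof (intro conjI allI impI)
  fix u v assume uv: "u < Suc k" "v < u"
  show "insert_zero_rowcol k s M $$ (u,v) = 0"
  proof (cases "u = s \<or> v = s")
    case False
    then have "unskip_index s v < unskip_index s u" "unskip_index s u < k"
      using uv assms by (auto simp: unskip_index_def)
    then show ?thesis using False uv assms by (auto simp: insert_zero_rowcol_index UT_iff)
  qed (use uv in \<open>auto simp: insert_zero_rowcol_index\<close>)
qed simp

text \<open>Only nonempty words occur (zero constant term): the empty word would evaluate to the
  identity, which does not vanish on the inserted row and column.\<close>
lemma insert_zero_rowcol_nc_eval:
  fixes p :: "'a::comm_ring_1 ncpoly"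
  assumes vars: "nc_vars m p" and p0: "Poly_Mapping.lookup p [] = 0"
    and a: "\<forall>i<m. a i \<in> carrier_mat k k" and s: "s \<le> k"
  shows "nc_eval (Suc k) p (\<lambda>i. insert_zero_rowcol k s (a i)) = insert_zero_rowcol k s (nc_eval k p a)"
proof (rule eq_matI)
  let ?E = "insert_zero_rowcol k s"
  fix u v assume "u < dim_row (?E (nc_eval k p a))" "v < dim_col (?E (nc_eval k p a))"
  then have uv: "u < Suc k" "v < Suc k" by auto
  have word: "word_prod (Suc k) (\<lambda>i. ?E (a i)) w = ?E (word_prod k a w)"
    if "set w \<subseteq> {..<m}" "w \<noteq> []" for w
    using that
  proof (induction w)
    case (Cons j w)
    have aj: "a j \<in> carrier_mat k k" using Cons.prems a by auto
    show ?case
    proof (cases "w = []")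
      case True
      then show ?thesis using aj by simp
    next
      case False
      have "word_prod k a w \<in> carrier_mat k k"
        using Cons.prems a by (intro word_prod_carrier) auto
      then show ?thesis using Cons False aj s by (simp add: insert_zero_rowcol_mult)
    qed
  qed simp
  have W: "word_prod (Suc k) (\<lambda>i. ?E (a i)) w = ?E (word_prod k a w)"
    if "w \<in> Poly_Mapping.keys p" for w
    using word nc_vars_keys[OF vars that] that p0 by (auto simp: in_keys_iff)
  show "nc_eval (Suc k) p (\<lambda>i. ?E (a i)) $$ (u,v) = ?E (nc_eval k p a) $$ (u,v)"
  proof (cases "u = s \<or> v = s")
    case True
    then show ?thesis using uv W by (simp add: nc_eval_entry insert_zero_rowcol_index)
  next
    case False
    then have "unskip_index s u < k" "unskip_index s v < k" using uv s unskip_index_less by auto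
    then show ?thesis using False uv W by (simp add: nc_eval_entry insert_zero_rowcol_index)
  qed
qed auto

lemma zero_in_nc_image:
  fixes p :: "'a::comm_ring_1 ncpoly"
  assumes "Poly_Mapping.lookup p [] = 0"
  shows "0\<^sub>m n n \<in> nc_image m n p"
proof -
  have "word_prod n (\<lambda>_. 0\<^sub>m n n) w = (0\<^sub>m n n :: 'a mat)" if w: "w \<in> Poly_Mapping.keys p" for w
  proof -
    obtain j w' where "w = j # w'" using w assms by (cases w) (auto simp: in_keys_iff)
    moreover have "word_prod n (\<lambda>_. 0\<^sub>m n n :: 'a mat) w' \<in> carrier_mat n n"
      by (intro word_prod_carrier) auto
    ultimately show ?thesis by simp
  qed
  then have "nc_eval n p (\<lambda>_. 0\<^sub>m n n) = 0\<^sub>m n n" by (intro eq_matI) (auto simp: nc_eval_entry)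
  moreover have "0\<^sub>m n n \<in> UT n" by (simp add: UT_iff)
  ultimately show ?thesis by (metis nc_eval_in_nc_image)
qed

definition single_entry_mat :: "nat \<Rightarrow> nat \<Rightarrow> nat \<Rightarrow> 'a::zero \<Rightarrow> 'a mat" where
  "single_entry_mat n a b c = mat n n (\<lambda>(u,v). if u = a \<and> v = b then c else 0)"

lemma single_entry_mat_carrier[simp]: "single_entry_mat n a b c \<in> carrier_mat n n"
  by (simp add: single_entry_mat_def)

lemma single_entry_mat_dim[simp]:
  "dim_row (single_entry_mat n a b c) = n" "dim_col (single_entry_mat n a b c) = n"
  by (simp_all add: single_entry_mat_def)

lemma single_entry_mat_index[simp]:
  "u < n \<Longrightarrow> v < n \<Longrightarrow> single_entry_mat n a b c $$ (u,v) = (if u = a \<and> v = b then c else 0)"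
  by (simp add: single_entry_mat_def)

lemma insert_zero_rowcol_single_entry:
  assumes "s \<le> k"
  shows "insert_zero_rowcol k s (single_entry_mat k a b c)
    = single_entry_mat (Suc k) (skip_index s a) (skip_index s b) c"
proof (rule eq_matI)
  fix u v assume "u < dim_row (single_entry_mat (Suc k) (skip_index s a) (skip_index s b) c)"
    "v < dim_col (single_entry_mat (Suc k) (skip_index s a) (skip_index s b) c)"
  then have uv: "u < Suc k" "v < Suc k" by auto
  show "insert_zero_rowcol k s (single_entry_mat k a b c) $$ (u,v)
      = single_entry_mat (Suc k) (skip_index s a) (skip_index s b) c $$ (u,v)"
  proof (cases "u = s \<or> v = s")
    case False
    then have "unskip_index s u < k" "unskip_index s v < k"
      "unskip_index s u = a \<longleftrightarrow> u = skip_index s a" "unskip_index s v = b \<longleftrightarrow> v = skip_index s b"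
      using uv assms unskip_index_less skip_unskip_index by fastforce+
    then show ?thesis using False uv by (simp add: insert_zero_rowcol_index)
  qed (use uv in \<open>auto simp: insert_zero_rowcol_index\<close>)
qed auto

lemma nc_image_single_entry_scale:
  fixes p :: "'a::field ncpoly"
  assumes vars: "nc_vars m p" and S: "single_entry_mat n a b c \<in> nc_image m n p"
    and "a \<noteq> b" "c \<noteq> 0" "e \<noteq> 0"
  shows "single_entry_mat n a b e \<in> nc_image m n p"
proof -
  define d where "d u = (if u = a then e / c else 1)" for u
  have "\<forall>u<n. d u \<noteq> 0" using assms by (auto simp: d_def)
  then have "mat_diag n d * single_entry_mat n a b c * mat_diag n (\<lambda>u. inverse (d u)) \<in> nc_image m n p"
    using vars S by (intro nc_image_mat_diag_conj)
  moreover have "mat_diag n d * single_entry_mat n a b c * mat_diag n (\<lambda>u. inverse (d u))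
      = single_entry_mat n a b e"
    using assms by (intro eq_matI) (auto simp: mat_diag_conj_index d_def carrier_matD[OF mat_diag_dim] simp del: index_mult_mat(1))
  ultimately show ?thesis by simp
qed

lemma nc_image_single_entry_extend_col:
  fixes p :: "'a::field ncpoly"
  assumes vars: "nc_vars m p" and S: "single_entry_mat n a b c \<in> nc_image m n p"
    and "c \<noteq> 0" "b < l" "l < n" "a \<noteq> l"
  shows "single_entry_mat n a b c + single_entry_mat n a l d \<in> nc_image m n p"
proof -
  define t where "t = - d / c"
  have "b < n" using assms by simp
  have "(addrow_mat n t b l * single_entry_mat n a b c * addrow_mat n (-t) b l) $$ (x,y)
      = (single_entry_mat n a b c + single_entry_mat n a l d) $$ (x,y)" if "x < n" "y < n" for x y
    using addrow_mat_conj_index[OF single_entry_mat_carrier that \<open>b < n\<close> \<open>l < n\<close>, of t a b c]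
      that assms by (auto simp: t_def)
  then have "addrow_mat n t b l * single_entry_mat n a b c * addrow_mat n (-t) b l
      = single_entry_mat n a b c + single_entry_mat n a l d"
    by (intro eq_matI) auto
  moreover have "addrow_mat n t b l * single_entry_mat n a b c * addrow_mat n (-t) b l \<in> nc_image m n p"
    using assms by (intro nc_image_addrow_conj)
  ultimately show ?thesis by simp
qed

lemma nc_image_single_entry_extend_row:
  fixes p :: "'a::field ncpoly"
  assumes vars: "nc_vars m p" and S: "single_entry_mat n a b c \<in> nc_image m n p"
    and "c \<noteq> 0" "k < a" "a < n" "k \<noteq> b"
  shows "single_entry_mat n a b c + single_entry_mat n k b d \<in> nc_image m n p"
proof -
  define t where "t = d / c"
  have "addrow_mat n t k a * single_entry_mat n a b c * addrow_mat n (-t) k a \<in> nc_image m n p"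
    using assms by (intro nc_image_addrow_conj)
  moreover have "addrow_mat n t k a * single_entry_mat n a b c * addrow_mat n (-t) k a
      = single_entry_mat n a b c + single_entry_mat n k b d"
    using assms by (intro eq_matI)
      (auto simp: addrow_mat_conj_index t_def simp del: index_mult_mat(1) assoc_mult_mat)
  ultimately show ?thesis by simp
qed

text \<open>The witness of non-vanishing on \<open>T\<^sub>r\<^sub>+\<^sub>1\<close> evaluates to a single corner entry; inserting a
  zero row and column at position \<open>s\<close> moves that entry to any of the three positions of
  \<open>T\<^sub>r\<^sub>+\<^sub>2\<^sup>(\<^sup>r\<^sup>-\<^sup>1\<^sup>)\<close>.\<close>
lemma nc_image_single_entry_corner:
  fixes p :: "'a::field ncpoly"
  assumes vars: "nc_vars m p" and p0: "Poly_Mapping.lookup p [] = 0"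
    and V: "nc_vanishes m r p" and r: "1 \<le> r"
    and a0: "\<forall>i<m. a0 i \<in> UT (Suc r)" "nc_eval (Suc r) p a0 $$ (0,r) \<noteq> 0"
    and s: "s \<le> Suc r" and z: "z \<noteq> 0"
  shows "single_entry_mat (Suc (Suc r)) (skip_index s 0) (skip_index s r) z \<in> nc_image m (Suc (Suc r)) p"
proof -
  define c where "c = nc_eval (Suc r) p a0 $$ (0,r)"
  have U: "nc_eval (Suc r) p a0 \<in> UT_pow (Suc r) (r - 1)"
    using nc_eval_in_UT_pow[OF vars V r] a0(1) by simp
  have Q: "nc_eval (Suc r) p a0 = single_entry_mat (Suc r) 0 r c"
  proof (rule eq_matI)
    fix u v assume "u < dim_row (single_entry_mat (Suc r) 0 r c)" "v < dim_col (single_entry_mat (Suc r) 0 r c)"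
    then have uv: "u < Suc r" "v < Suc r" by auto
    show "nc_eval (Suc r) p a0 $$ (u,v) = single_entry_mat (Suc r) 0 r c $$ (u,v)"
    proof (cases "u = 0 \<and> v = r")
      case False
      then have "int v - int u \<le> int (r - 1)" using uv by auto
      then show ?thesis using UT_pow_zero[OF U uv] uv False by auto
    qed (use uv c_def in simp)
  qed auto
  have "single_entry_mat (Suc (Suc r)) (skip_index s 0) (skip_index s r) c
      = nc_eval (Suc (Suc r)) p (\<lambda>i. insert_zero_rowcol (Suc r) s (a0 i))"
    using a0(1) s
    by (simp add: insert_zero_rowcol_nc_eval[OF vars p0] Q insert_zero_rowcol_single_entry UT_iff)
  also have "\<dots> \<in> nc_image m (Suc (Suc r)) p"
    using a0(1) s by (intro nc_eval_in_nc_image) (auto intro: insert_zero_rowcol_UT)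
  finally have S: "single_entry_mat (Suc (Suc r)) (skip_index s 0) (skip_index s r) c
    \<in> nc_image m (Suc (Suc r)) p" .
  have "skip_index s 0 \<noteq> skip_index s r" using r by (auto simp: skip_index_def)
  from nc_image_single_entry_scale[OF vars S this] a0(2) z show ?thesis by (simp add: c_def)
qed


lemma nc_image_eq_UT_pow_Suc_Suc:
  fixes p :: "'a::field ncpoly"
  assumes vars: "nc_vars m p" and p0: "Poly_Mapping.lookup p [] = 0"
    and V: "nc_vanishes m r p" and r: "1 \<le> r"
    and a0: "\<forall>i<m. a0 i \<in> UT (Suc r)" "nc_eval (Suc r) p a0 $$ (0,r) \<noteq> 0"
    and superdiag: "\<And>X. X \<in> UT_pow (Suc (Suc r)) (r - 1) \<Longrightarrow>
      \<forall>x. x + r < Suc (Suc r) \<longrightarrow> X $$ (x,x+r) \<noteq> 0 \<Longrightarrow> X \<in> nc_image m (Suc (Suc r)) p"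
  shows "nc_image m (Suc (Suc r)) p = UT_pow (Suc (Suc r)) (r - 1)"
proof (intro equalityI subsetI)
  fix X assume "X \<in> nc_image m (Suc (Suc r)) p"
  then show "X \<in> UT_pow (Suc (Suc r)) (r - 1)" using nc_image_subset_UT_pow[OF vars V r] by blast
next
  let ?n = "Suc (Suc r)"
  let ?E = "single_entry_mat ?n"
  fix X :: "'a mat" assume X: "X \<in> UT_pow ?n (r - 1)"
  define \<alpha> \<beta> \<gamma> where "\<alpha> = X $$ (0,r)" and "\<beta> = X $$ (1, Suc r)" and "\<gamma> = X $$ (0, Suc r)"
  have Xe: "X = ?E 0 r \<alpha> + ?E 1 (Suc r) \<beta> + ?E 0 (Suc r) \<gamma>"
  proof (rule eq_matI)
    fix u v assume "u < dim_row (?E 0 r \<alpha> + ?E 1 (Suc r) \<beta> + ?E 0 (Suc r) \<gamma>)"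
      "v < dim_col (?E 0 r \<alpha> + ?E 1 (Suc r) \<beta> + ?E 0 (Suc r) \<gamma>)"
    then have uv: "u < ?n" "v < ?n" by auto
    show "X $$ (u,v) = (?E 0 r \<alpha> + ?E 1 (Suc r) \<beta> + ?E 0 (Suc r) \<gamma>) $$ (u,v)"
    proof (cases "(u = 0 \<and> v = r) \<or> (u = 1 \<and> v = Suc r) \<or> (u = 0 \<and> v = Suc r)")
      case True
      then show ?thesis using uv r by (auto simp: \<alpha>_def \<beta>_def \<gamma>_def)
    next
      case False
      then have "int v - int u \<le> int (r - 1)" using uv r by auto
      then show ?thesis using UT_pow_zero[OF X uv] uv False by auto
    qed
  qed (use X in \<open>auto simp: UT_pow_def\<close>)
  have corner: "?E (skip_index s 0) (skip_index s r) z \<in> nc_image m ?n p"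
    if "s \<le> Suc r" "z \<noteq> 0" for s z
    using nc_image_single_entry_corner[OF vars p0 V r a0 that] .
  consider "\<alpha> \<noteq> 0" "\<beta> \<noteq> 0" | "\<alpha> \<noteq> 0" "\<beta> = 0" | "\<alpha> = 0" "\<beta> \<noteq> 0"
    | "\<alpha> = 0" "\<beta> = 0" "\<gamma> \<noteq> 0" | "\<alpha> = 0" "\<beta> = 0" "\<gamma> = 0"
    by blast
  then show "X \<in> nc_image m ?n p"
  proof cases
    case 1
    have "X $$ (x,x+r) \<noteq> 0" if "x + r < ?n" for x
      using that 1 by (cases x) (auto simp: \<alpha>_def \<beta>_def)
    then show ?thesis using superdiag[OF X] by blast
  next
    case 2
    have "?E 0 r \<alpha> \<in> nc_image m ?n p" using corner[of "Suc r" \<alpha>] 2 by (simp add: skip_index_def)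
    then have "?E 0 r \<alpha> + ?E 0 (Suc r) \<gamma> \<in> nc_image m ?n p"
      using 2 by (intro nc_image_single_entry_extend_col[OF vars]) auto
    moreover have "X = ?E 0 r \<alpha> + ?E 0 (Suc r) \<gamma>"
      using 2 unfolding Xe by (intro eq_matI) auto
    ultimately show ?thesis by simp
  next
    case 3
    have "?E 1 (Suc r) \<beta> \<in> nc_image m ?n p" using corner[of 0 \<beta>] 3 by (simp add: skip_index_def)
    then have "?E 1 (Suc r) \<beta> + ?E 0 (Suc r) \<gamma> \<in> nc_image m ?n p"
      using 3 by (intro nc_image_single_entry_extend_row[OF vars]) auto
    moreover have "X = ?E 1 (Suc r) \<beta> + ?E 0 (Suc r) \<gamma>"
      using 3 unfolding Xe by (intro eq_matI) auto
    ultimately show ?thesis by simp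
  next
    case 4
    have "?E 0 (Suc r) \<gamma> \<in> nc_image m ?n p" using corner[of 1 \<gamma>] 4 r by (simp add: skip_index_def)
    moreover have "X = ?E 0 (Suc r) \<gamma>"
      using 4 unfolding Xe by (intro eq_matI) auto
    ultimately show ?thesis by simp
  next
    case 5
    have "X = 0\<^sub>m ?n ?n" using 5 unfolding Xe by (intro eq_matI) auto
    then show ?thesis using zero_in_nc_image[OF p0] by simp
  qed
qed

theorem theorem1p3:
  fixes p :: "'a::field ncpoly" and n m r :: nat
  assumes "n \<ge> 2" and "m \<ge> 1"
    and "infinite (UNIV :: 'a set)"
    and "nc_vars m p"
    and "Poly_Mapping.lookup p [] = 0"
    and "nc_has_order m p r"
    and "1 < r" and "r < n - 1"
  shows "{A + B | A B. A \<in> nc_image m n p \<and> B \<in> nc_image m n p} = UT_pow n (r - 1)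
    \<and> (r = n - 2 \<longrightarrow> nc_image m n p = UT_pow n (n - 3))"
proof -
  note inf = assms(3) and vars = assms(4) and p0 = assms(5)
  have r: "1 \<le> r" using assms(7) by simp
  have V: "nc_vanishes m r p" and NV: "\<not> nc_vanishes m (r+1) p"
    using assms(6,7) unfolding nc_has_order_def by auto
  obtain a0 where a0: "\<forall>i<m. a0 i \<in> UT (r+1)" "nc_eval (r+1) p a0 $$ (0,r) \<noteq> 0"
    using nc_not_vanishes_Suc_corner[OF vars V r NV] by blast
  have incl: "nc_image m k p \<subseteq> UT_pow k (r - 1)" for k
    using nc_image_subset_UT_pow[OF vars V r] .
  have superdiag: "X \<in> nc_image m k p"
    if "X \<in> UT_pow k (r - 1)" "\<forall>x. x + r < k \<longrightarrow> X $$ (x,x+r) \<noteq> 0" for k X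
  proof -
    obtain A where A: "\<forall>i<m. A i \<in> UT k" "\<forall>x. x + r < k \<longrightarrow> nc_eval k p A $$ (x,x+r) \<noteq> 0"
      using nc_eval_superdiag_nonzero[OF vars inf a0] by blast
    from nc_image_of_superdiag_nonzero[OF vars incl r nc_eval_in_nc_image[OF A(1)] A(2) that]
    show ?thesis .
  qed
  obtain b :: 'a where b: "b \<noteq> 0" "b \<noteq> 1" using ex_new_if_finite[OF inf, of "{0,1}"] by auto
  show ?thesis
  proof (intro conjI impI)
    show "{A + B | A B. A \<in> nc_image m n p \<and> B \<in> nc_image m n p} = UT_pow n (r - 1)"
      by (rule sumset_eq_UT_pow[OF incl r b superdiag])
  next
    assume "r = n - 2"
    then have n: "n = Suc (Suc r)" "n - 3 = r - 1" using assms(1,7) by auto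
    have "nc_image m (Suc (Suc r)) p = UT_pow (Suc (Suc r)) (r - 1)"
      using a0 by (intro nc_image_eq_UT_pow_Suc_Suc[OF vars p0 V r _ _ superdiag]) auto
    with n show "nc_image m n p = UT_pow n (n - 3)" by simp
  qed
qed

end
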